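(* Let $n\ge1$, $\lambda_1>2$, $0<\alpha\le n(\lambda_1-2)/2$, and let $r\in\mathbb{Z}_+$, $\gamma_n=\frac{\alpha}{2(n+\alpha)}$. Let $I\in\mathcal D_n$ be good, $k\ge1$ an integer, and $(x_1,t_1)\in W_I$. Then $$\Big[\int_{\mathbb{R}^n}\Big(\int_{(I^{(k-1)})^c}\frac{t_1^\alpha\,dz_1}{(t_1+|x_1-y_1-z_1|)^{n+\alpha}}\Big)^2\Big(\frac{t_1}{t_1+|y_1|}\Big)^{n\lambda_1}\frac{dy_1}{t_1^n}\Big]^{1/2}\lesssim 2^{-\alpha k/2},$$ with implied constant depending only on $n,\alpha,\lambda_1,r$.
   Context: $\ell^\infty$ norm on $\mathbb{R}^n$. $\mathcal D_n$ is a dyadic grid in $\mathbb{R}^n$; $W_I=I\times(\ell(I)/2,\ell(I))$; $I^{(k)}$ denotes the unique cube of $\mathcal D_n$ with $\ell(I^{(k)})=2^k\ell(I)$ containing $I$ (so $I^{(0)}=I$). A cube $I\in\mathcal D_n$ is bad if there is $J\in\mathcal D_n$ with $\ell(J)\ge2^r\ell(I)$ and $\operatorname{dist}(I,\partial J)\le\ell(I)^{\gamma_n}\ell(J)^{1-\gamma_n}$; otherwise it is good. *)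

theory Defs
  imports "HOL-Analysis.Analysis"
begin

definition supn :: "real^'n \<Rightarrow> real" where
  "supn x = Max (range (\<lambda>i. \<bar>x $ i\<bar>))"

definition cube :: "real^'n \<Rightarrow> real \<Rightarrow> (real^'n) set" where
  "cube a l = {x. \<forall>i. a $ i \<le> x $ i \<and> x $ i < a $ i + l}"

definition valid_shift :: "(int \<Rightarrow> real^'n) \<Rightarrow> bool" where
  "valid_shift \<omega> \<longleftrightarrow> (\<forall>j i. \<omega> j $ i \<in> {0, 1})"

definition dshift :: "(int \<Rightarrow> real^'n) \<Rightarrow> int \<Rightarrow> real^'n" where
  "dshift \<omega> j = (\<Sum>i. (2 powr (- (real_of_int j + 1 + real i))) *\<^sub>R \<omega> (j + 1 + int i))"

(* dyadic grid D^omega, cubes represented as (corner, side length);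
   D^omega = { 2^-j ([0,1)^n + m) + sum_{i>j} 2^-i omega_i }.  omega = 0 gives the standard grid. *)
definition dyadic_grid :: "(int \<Rightarrow> real^'n) \<Rightarrow> ((real^'n) \<times> real) set" where
  "dyadic_grid \<omega> = {(a, l). \<exists>(j::int) (m::'n \<Rightarrow> int).
      l = 2 powr (- real_of_int j) \<and>
      a = (2 powr (- real_of_int j)) *\<^sub>R (\<chi> i. real_of_int (m i)) + dshift \<omega> j}"

definition sdist :: "(real^'n) set \<Rightarrow> (real^'n) set \<Rightarrow> real" where
  "sdist A B = Inf {supn (x - y) | x y. x \<in> A \<and> y \<in> B}"

definition bad_cube :: "(int \<Rightarrow> real^'n) \<Rightarrow> nat \<Rightarrow> real \<Rightarrow> real^'n \<Rightarrow> real \<Rightarrow> bool" where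
  "bad_cube \<omega> r \<gamma> a l \<longleftrightarrow> (\<exists>b L. (b, L) \<in> dyadic_grid \<omega> \<and> L \<ge> 2 ^ r * l \<and>
      sdist (cube a l) (frontier (cube b L)) \<le> l powr \<gamma> * L powr (1 - \<gamma>))"

definition good_cube :: "(int \<Rightarrow> real^'n) \<Rightarrow> nat \<Rightarrow> real \<Rightarrow> real^'n \<Rightarrow> real \<Rightarrow> bool" where
  "good_cube \<omega> r \<gamma> a l \<longleftrightarrow> (a, l) \<in> dyadic_grid \<omega> \<and> \<not> bad_cube \<omega> r \<gamma> a l"

end

theory Submission
  imports Defs
begin

(*
  Put J = I^(k-1) and D = l(I)^gamma * l(J)^(1-gamma). After rescaling by t_1, every integral in
  sight becomes an integral of (1 + |u|)^(-p) with p > n, hence finite; so only the decay in k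
  matters, and for k <= r there is nothing to prove. For k > r, goodness of I gives
  dist(I, boundary J) > D, so every z_1 outside J is at distance > D from x_1. Where |y_1| <= D/2
  the kernel is evaluated at distance >= D/2 and yields a factor (2 t_1 / D)^beta; where
  |y_1| > D/2 the weight yields (2 t_1 / D)^(2 beta). The choice beta = alpha (n + alpha) / (2n + alpha),
  i.e. 2 beta (1 - gamma) = alpha, makes (2 t_1 / D)^(2 beta) <~ 2^(-alpha k), and
  2 beta < 2 alpha <= n (lambda_1 - 2) keeps kernel and weight integrable after these losses.
*)

lemma abs_component_le_supn: "\<bar>x $ i\<bar> \<le> supn x"
  unfolding supn_def by (rule Max_ge) auto

lemma supn_nonneg: "0 \<le> supn x"
  using abs_component_le_supn[of x undefined] by linarith

lemma supn_leI: "(\<And>i. \<bar>x $ i\<bar> \<le> c) \<Longrightarrow> supn x \<le> c"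
  unfolding supn_def by (subst Max_le_iff) auto

lemma supn_triangle: "supn (x + y) \<le> supn x + supn y"
  by (rule supn_leI) (metis abs_triangle_ineq add_mono abs_component_le_supn vector_add_component order_trans)

lemma supn_uminus: "supn (- x) = supn x"
  unfolding supn_def by simp

lemma supn_scaleR: "supn (c *\<^sub>R x) = \<bar>c\<bar> * supn x"
proof -
  have "range (\<lambda>i. \<bar>(c *\<^sub>R x) $ i\<bar>) = (\<lambda>v. \<bar>c\<bar> * v) ` range (\<lambda>i. \<bar>x $ i\<bar>)"
    by (auto simp: abs_mult)
  then show ?thesis unfolding supn_def
    by (simp add: mono_Max_commute[symmetric] monoI mult_left_mono)
qed

lemma borel_measurable_supn [measurable]: "supn \<in> borel_measurable borel"
  unfolding supn_def by measurable

lemma abs_inner_Basis_le_supn: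
  fixes u :: "real^'n"
  assumes "b \<in> Basis"
  shows "\<bar>u \<bullet> b\<bar> \<le> supn u"
proof -
  obtain i where "b = axis i 1" using assms unfolding Basis_vec_def by auto
  then show ?thesis using abs_component_le_supn[of u i] by (simp add: inner_axis)
qed

lemma nn_integral_kernel_rescale:
  fixes v :: "real^'n"
  assumes t: "0 < t"
  shows "(\<integral>\<^sup>+z. ennreal (t powr (p - real CARD('n)) / (t + supn (v - z)) powr p) \<partial>lborel)
       = (\<integral>\<^sup>+(u::real^'n). ennreal (1 / (1 + supn u) powr p) \<partial>lborel)"
proof -
  let ?f = "\<lambda>z::real^'n. ennreal (t powr (p - real CARD('n)) / (t + supn (v - z)) powr p)"
  have rescaled: "ennreal (\<bar>-t\<bar> ^ DIM(real^'n)) * ?f (v + (-t) *\<^sub>R u) = ennreal (1 / (1 + supn u) powr p)"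
    for u :: "real^'n"
  proof -
    have pos: "0 < 1 + supn u" using supn_nonneg[of u] by linarith
    have "t + supn (v - (v + (-t) *\<^sub>R u)) = t * (1 + supn u)"
      using supn_scaleR[of t u] t by (simp add: algebra_simps)
    moreover have "(t * (1 + supn u)) powr p = t powr p * (1 + supn u) powr p"
      using t pos by (simp add: powr_mult)
    moreover have "t ^ CARD('n) * t powr (p - real CARD('n)) = t powr p"
      using t by (simp add: powr_diff powr_realpow)
    ultimately show ?thesis
      using t pos by (simp add: ennreal_mult'[symmetric] field_simps del: scaleR_minus_left)
  qed
  have "(\<integral>\<^sup>+z. ?f z \<partial>lborel) = (\<integral>\<^sup>+u. ennreal (\<bar>-t\<bar> ^ DIM(real^'n)) * ?f (v + (-t) *\<^sub>R u) \<partial>lborel)"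
    by (subst lborel_affine[of "-t" v]) (use t in \<open>simp_all add: nn_integral_density nn_integral_distr\<close>)
  then show ?thesis unfolding rescaled .
qed

lemma nn_integral_weight_rescale:
  assumes t: "0 < t"
  shows "(\<integral>\<^sup>+(y::real^'n). ennreal ((t / (t + supn y)) powr q / t ^ CARD('n)) \<partial>lborel)
       = (\<integral>\<^sup>+(u::real^'n). ennreal (1 / (1 + supn u) powr q) \<partial>lborel)"
proof -
  have "(t / (t + supn y)) powr q / t ^ CARD('n) = t powr (q - real CARD('n)) / (t + supn (0 - y)) powr q"
    for y :: "real^'n"
  proof -
    have "0 < t + supn y" using t supn_nonneg[of y] by linarith
    moreover have "t ^ CARD('n) = t powr real CARD('n)" using t by (simp add: powr_realpow)
    ultimately show ?thesis using t by (simp add: supn_uminus powr_divide powr_diff)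
  qed
  then show ?thesis using nn_integral_kernel_rescale[OF t, of q 0] by simp
qed

lemma nn_integral_one_plus_abs_powr_finite:
  assumes a: "1 < a"
  shows "(\<integral>\<^sup>+x. ennreal (1 / (1 + \<bar>x\<bar>) powr a) \<partial>lborel) < \<infinity>"
proof -
  define g where "g x = ennreal (indicator {0..} x * (1 / (1 + x) powr a))" for x :: real
  have g[measurable]: "g \<in> borel_measurable borel" unfolding g_def by measurable
  have "ennreal (1 / (1 + \<bar>x\<bar>) powr a) \<le> g x + g (-x)" for x
    by (cases "0 \<le> x") (auto simp: g_def)
  then have "(\<integral>\<^sup>+x. ennreal (1 / (1 + \<bar>x\<bar>) powr a) \<partial>lborel) \<le> (\<integral>\<^sup>+x. g x + g (-x) \<partial>lborel)"
    by (rule nn_integral_mono)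
  also have "\<dots> = (\<integral>\<^sup>+x. g x \<partial>lborel) + (\<integral>\<^sup>+x. g (-x) \<partial>lborel)"
    by (rule nn_integral_add) measurable
  also have "(\<integral>\<^sup>+x. g (-x) \<partial>lborel) = (\<integral>\<^sup>+x. g x \<partial>lborel)"
    using nn_integral_real_affine[OF g, of "-1" 0] by simp
  also have "(\<integral>\<^sup>+x. g x \<partial>lborel) = (\<integral>\<^sup>+x. g (-1 + 1 * x) \<partial>lborel)"
    using nn_integral_real_affine[OF g, of 1 "-1"] by simp
  also have "\<dots> = (\<integral>\<^sup>+x. ennreal (indicator {1..} x * x powr (-a)) \<partial>lborel)"
    by (rule nn_integral_cong) (auto simp: g_def indicator_def powr_minus_divide)
  also have "\<dots> = ennreal (1 / (a - 1))"
  proof (rule nn_integral_has_integral_lebesgue)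
    have "- (1 / (1 - a)) = 1 / (a - 1)" using a by (simp add: field_simps)
    then show "((\<lambda>x. x powr (-a)) has_integral 1 / (a - 1)) {1..}"
      using has_integral_powr_to_inf[of "-a" 1] a by simp
  qed simp
  finally show ?thesis
    using ennreal_add_less_top[of "ennreal (1 / (a - 1))" "ennreal (1 / (a - 1))"]
    by (simp add: le_less_trans)
qed

lemma nn_integral_one_plus_supn_powr_finite:
  assumes p: "real CARD('n) < p"
  shows "(\<integral>\<^sup>+(u::real^'n). ennreal (1 / (1 + supn u) powr p) \<partial>lborel) < \<infinity>"
proof -
  define a where "a = p / real CARD('n)"
  have a: "1 < a" using p unfolding a_def by simp
  have pointwise: "1 / (1 + supn u) powr p \<le> (\<Prod>b\<in>Basis. 1 / (1 + \<bar>u \<bullet> b\<bar>) powr a)"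
    for u :: "real^'n"
  proof -
    have pos: "0 < 1 + supn u" using supn_nonneg[of u] by linarith
    then have "((1 + supn u) powr a) ^ CARD('n) = (1 + supn u) powr p"
      by (simp add: a_def powr_realpow[symmetric] powr_powr)
    then have "1 / (1 + supn u) powr p = (1 / (1 + supn u) powr a) ^ CARD('n)"
      by (simp add: power_one_over)
    also have "\<dots> = (\<Prod>b\<in>(Basis::(real^'n) set). 1 / (1 + supn u) powr a)"
      by simp
    also have "\<dots> \<le> (\<Prod>b\<in>Basis. 1 / (1 + \<bar>u \<bullet> b\<bar>) powr a)"
    proof (rule prod_mono)
      fix b :: "real^'n" assume "b \<in> Basis"
      then have "(1 + \<bar>u \<bullet> b\<bar>) powr a \<le> (1 + supn u) powr a"
        using a by (intro powr_mono2 add_left_mono abs_inner_Basis_le_supn) auto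
      then show "0 \<le> 1 / (1 + supn u) powr a \<and> 1 / (1 + supn u) powr a \<le> 1 / (1 + \<bar>u \<bullet> b\<bar>) powr a"
        using pos by (auto intro!: divide_left_mono)
    qed
    finally show ?thesis .
  qed
  have "(\<integral>\<^sup>+(u::real^'n). ennreal (1 / (1 + supn u) powr p) \<partial>lborel)
      \<le> (\<integral>\<^sup>+(u::real^'n). (\<Prod>b\<in>Basis. ennreal (1 / (1 + \<bar>u \<bullet> b\<bar>) powr a)) \<partial>lborel)"
    by (intro nn_integral_mono) (simp add: pointwise prod_ennreal ennreal_leI)
  also have "\<dots> = (\<Prod>b\<in>(Basis::(real^'n) set). \<integral>\<^sup>+x. ennreal (1 / (1 + \<bar>x\<bar>) powr a) \<partial>lborel)"
    by (rule nn_integral_lborel_prod) auto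
  also have "\<dots> < \<infinity>"
    using nn_integral_one_plus_abs_powr_finite[OF a]
    by (simp add: power_less_top_ennreal)
  finally show ?thesis .
qed

lemma sdist_frontier_less_supn_diff:
  fixes x z :: "real^'n"
  assumes xI: "x \<in> I" and xJ: "x \<in> J" and zJ: "z \<notin> J" and D: "D < sdist I (frontier J)"
  shows "D < supn (x - z)"
proof -
  have "closed_segment x z \<inter> frontier J \<noteq> {}"
    by (rule connected_Int_frontier) (use xJ zJ in auto)
  then obtain p where p: "p \<in> frontier J" "p \<in> closed_segment x z" by blast
  then obtain u where u: "0 \<le> u" "u \<le> 1" "p = (1 - u) *\<^sub>R x + u *\<^sub>R z"
    unfolding in_segment by auto
  have "x - p = u *\<^sub>R (x - z)" using u by (simp add: algebra_simps)
  then have "supn (x - p) \<le> supn (x - z)"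
    using u supn_nonneg[of "x - z"] by (simp add: supn_scaleR mult_left_le_one_le)
  moreover have "sdist I (frontier J) \<le> supn (x - p)"
    unfolding sdist_def
    by (rule cInf_lower) (use xI p in \<open>auto intro!: bdd_belowI[of _ 0] simp: supn_nonneg\<close>)
  ultimately show ?thesis using D by linarith
qed

lemma ratio_powr_le_separation:
  fixes t D s e :: real
  assumes t: "0 < t" and D: "0 < D" and s: "D / 2 \<le> s" and e: "0 \<le> e"
  shows "(t / (t + s)) powr e \<le> (2 * t / D) powr e"
proof -
  have "t / (t + s) \<le> t / (D / 2)" using t D s by (intro divide_left_mono) auto
  also have "\<dots> = 2 * t / D" by simp
  finally show ?thesis using t D s e by (intro powr_mono2) auto
qed

lemma kernel_le_separation_gain:
  fixes t D s \<alpha> \<beta> n :: real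
  assumes t: "0 < t" and D: "0 < D" and s: "D / 2 \<le> s" and \<beta>: "0 \<le> \<beta>"
  shows "t powr \<alpha> / (t + s) powr (n + \<alpha>)
    \<le> (2 * t / D) powr \<beta> * (t powr (\<alpha> - \<beta>) / (t + s) powr (n + (\<alpha> - \<beta>)))"
proof -
  have ts: "0 < t + s" using t s D by linarith
  have "t powr \<alpha> / (t + s) powr (n + \<alpha>)
      = (t / (t + s)) powr \<beta> * (t powr (\<alpha> - \<beta>) / (t + s) powr (n + (\<alpha> - \<beta>)))"
    using t ts by (simp add: powr_divide powr_add[symmetric] diff_add_eq add.assoc)
  also have "\<dots> \<le> (2 * t / D) powr \<beta> * (t powr (\<alpha> - \<beta>) / (t + s) powr (n + (\<alpha> - \<beta>)))"
    by (intro mult_right_mono ratio_powr_le_separation assms) simp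
  finally show ?thesis .
qed

lemma weight_le_separation_gain:
  fixes t D s m e :: real
  assumes t: "0 < t" and D: "0 < D" and s: "D / 2 \<le> s" and e: "0 \<le> e"
  shows "(t / (t + s)) powr m \<le> (2 * t / D) powr e * (t / (t + s)) powr (m - e)"
proof -
  have "0 < t + s" using t s D by linarith
  then have "(t / (t + s)) powr m = (t / (t + s)) powr e * (t / (t + s)) powr (m - e)"
    using t by (simp add: powr_add[symmetric])
  also have "\<dots> \<le> (2 * t / D) powr e * (t / (t + s)) powr (m - e)"
    by (intro mult_right_mono ratio_powr_le_separation assms) simp
  finally show ?thesis .
qed

lemma nn_integral_kernel_on_le:
  fixes v :: "real^'n"
  assumes t: "0 < t"
  shows "(\<integral>\<^sup>+z\<in>A. ennreal (t powr \<alpha> / (t + supn (v - z)) powr (real CARD('n) + \<alpha>)) \<partial>lborel)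
    \<le> (\<integral>\<^sup>+(u::real^'n). ennreal (1 / (1 + supn u) powr (real CARD('n) + \<alpha>)) \<partial>lborel)"
proof -
  have "(\<integral>\<^sup>+z\<in>A. ennreal (t powr \<alpha> / (t + supn (v - z)) powr (real CARD('n) + \<alpha>)) \<partial>lborel)
      \<le> (\<integral>\<^sup>+z. ennreal (t powr \<alpha> / (t + supn (v - z)) powr (real CARD('n) + \<alpha>)) \<partial>lborel)"
    by (intro nn_integral_mono) (auto simp: indicator_def)
  also have "\<dots> = (\<integral>\<^sup>+(u::real^'n). ennreal (1 / (1 + supn u) powr (real CARD('n) + \<alpha>)) \<partial>lborel)"
    using nn_integral_kernel_rescale[OF t, of "real CARD('n) + \<alpha>" v] by simp
  finally show ?thesis .
qed

lemma nn_integral_kernel_outside_le: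
  fixes v :: "real^'n"
  assumes t: "0 < t" and D: "0 < D" and \<beta>: "0 \<le> \<beta>"
    and far: "\<And>z. z \<notin> J \<Longrightarrow> D / 2 \<le> supn (v - z)"
  shows "(\<integral>\<^sup>+z\<in>-J. ennreal (t powr \<alpha> / (t + supn (v - z)) powr (real CARD('n) + \<alpha>)) \<partial>lborel)
    \<le> ennreal ((2 * t / D) powr \<beta>)
       * (\<integral>\<^sup>+(u::real^'n). ennreal (1 / (1 + supn u) powr (real CARD('n) + (\<alpha> - \<beta>))) \<partial>lborel)"
proof -
  let ?n = "real CARD('n)"
  have "(\<integral>\<^sup>+z\<in>-J. ennreal (t powr \<alpha> / (t + supn (v - z)) powr (?n + \<alpha>)) \<partial>lborel)
      \<le> (\<integral>\<^sup>+z. ennreal ((2 * t / D) powr \<beta>)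
            * ennreal (t powr (\<alpha> - \<beta>) / (t + supn (v - z)) powr (?n + (\<alpha> - \<beta>))) \<partial>lborel)"
  proof (intro nn_integral_mono)
    fix z :: "real^'n"
    show "ennreal (t powr \<alpha> / (t + supn (v - z)) powr (?n + \<alpha>)) * indicator (- J) z
      \<le> ennreal ((2 * t / D) powr \<beta>) * ennreal (t powr (\<alpha> - \<beta>) / (t + supn (v - z)) powr (?n + (\<alpha> - \<beta>)))"
      using kernel_le_separation_gain[OF t D far \<beta>, of z \<alpha> ?n]
      by (cases "z \<in> J") (simp_all add: ennreal_mult'[symmetric] ennreal_leI)
  qed
  also have "\<dots> = ennreal ((2 * t / D) powr \<beta>)
      * (\<integral>\<^sup>+z. ennreal (t powr (\<alpha> - \<beta>) / (t + supn (v - z)) powr (?n + (\<alpha> - \<beta>))) \<partial>lborel)"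
    by (rule nn_integral_cmult) measurable
  also have "(\<integral>\<^sup>+z. ennreal (t powr (\<alpha> - \<beta>) / (t + supn (v - z)) powr (?n + (\<alpha> - \<beta>))) \<partial>lborel)
      = (\<integral>\<^sup>+(u::real^'n). ennreal (1 / (1 + supn u) powr (?n + (\<alpha> - \<beta>))) \<partial>lborel)"
    using nn_integral_kernel_rescale[OF t, of "?n + (\<alpha> - \<beta>)" v] by simp
  finally show ?thesis .
qed

lemma nn_integral_square_kernel_weight_le_separated:
  fixes x :: "real^'n" and \<alpha> \<beta> m :: real
  assumes t: "0 < t" and D: "0 < D" and \<beta>: "0 \<le> \<beta>"
    and sep: "\<And>z. z \<notin> J \<Longrightarrow> D < supn (x - z)"
  defines "A\<^sub>0 \<equiv> \<integral>\<^sup>+(u::real^'n). ennreal (1 / (1 + supn u) powr (real CARD('n) + \<alpha>)) \<partial>lborel"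
    and "A\<^sub>\<beta> \<equiv> \<integral>\<^sup>+(u::real^'n). ennreal (1 / (1 + supn u) powr (real CARD('n) + (\<alpha> - \<beta>))) \<partial>lborel"
    and "B \<equiv> \<integral>\<^sup>+(u::real^'n). ennreal (1 / (1 + supn u) powr (m - 2 * \<beta>)) \<partial>lborel"
  shows "(\<integral>\<^sup>+y. (\<integral>\<^sup>+z\<in>-J. ennreal (t powr \<alpha> / (t + supn (x - y - z)) powr (real CARD('n) + \<alpha>)) \<partial>lborel) ^ 2
           * ennreal ((t / (t + supn y)) powr m / t ^ CARD('n)) \<partial>lborel)
    \<le> ennreal ((2 * t / D) powr (2 * \<beta>)) * (A\<^sub>0\<^sup>2 + A\<^sub>\<beta>\<^sup>2) * B"
proof -
  define q where "q = 2 * t / D"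
  define F where "F y = (\<integral>\<^sup>+z\<in>-J. ennreal (t powr \<alpha> / (t + supn (x - y - z)) powr (real CARD('n) + \<alpha>)) \<partial>lborel)"
    for y
  define W where "W e y = ennreal ((t / (t + supn y)) powr e / t ^ CARD('n))" for e and y :: "real^'n"
  have q: "0 < q" unfolding q_def using t D by simp
  have pointwise: "F y ^ 2 * W m y \<le> ennreal (q powr (2 * \<beta>)) * (A\<^sub>0\<^sup>2 + A\<^sub>\<beta>\<^sup>2) * W (m - 2 * \<beta>) y" for y
  proof -
    have ty: "0 < t + supn y" using t supn_nonneg[of y] by linarith
    show ?thesis
    proof (cases "supn y \<le> D / 2")
      case True
      have "D / 2 \<le> supn (x - y - z)" if "z \<notin> J" for z
        using sep[OF that] supn_triangle[of "x - y - z" y] True by simp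
      then have "F y \<le> ennreal (q powr \<beta>) * A\<^sub>\<beta>"
        unfolding F_def q_def A\<^sub>\<beta>_def by (rule nn_integral_kernel_outside_le[OF t D \<beta>])
      then have "F y ^ 2 \<le> (ennreal (q powr \<beta>) * A\<^sub>\<beta>) ^ 2"
        by (rule power_mono) simp
      also have "\<dots> = ennreal (q powr (2 * \<beta>)) * A\<^sub>\<beta>\<^sup>2"
      proof -
        have "ennreal (q powr \<beta>) ^ 2 = ennreal (q powr (2 * \<beta>))"
          using q by (simp add: power2_eq_square ennreal_mult'[symmetric] powr_add[symmetric])
        then show ?thesis by (simp add: power_mult_distrib)
      qed
      finally have "F y ^ 2 \<le> ennreal (q powr (2 * \<beta>)) * A\<^sub>\<beta>\<^sup>2" .
      moreover have "W m y \<le> W (m - 2 * \<beta>) y"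
        unfolding W_def using t ty \<beta> supn_nonneg[of y]
        by (intro ennreal_leI divide_right_mono powr_mono') auto
      ultimately have "F y ^ 2 * W m y \<le> ennreal (q powr (2 * \<beta>)) * A\<^sub>\<beta>\<^sup>2 * W (m - 2 * \<beta>) y"
        by (intro mult_mono) auto
      then show ?thesis
        by (rule order_trans) (intro mult_left_mono mult_right_mono add_increasing; simp)
    next
      case False
      have "F y \<le> A\<^sub>0"
        unfolding F_def A\<^sub>0_def by (rule nn_integral_kernel_on_le[OF t])
      moreover have "W m y \<le> ennreal (q powr (2 * \<beta>)) * W (m - 2 * \<beta>) y"
        using weight_le_separation_gain[OF t D _ , of "supn y" "2 * \<beta>" m] False \<beta> t
        unfolding W_def q_def
        by (simp add: ennreal_mult'[symmetric] ennreal_leI divide_right_mono mult.assoc)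
      ultimately have "F y ^ 2 * W m y \<le> A\<^sub>0\<^sup>2 * (ennreal (q powr (2 * \<beta>)) * W (m - 2 * \<beta>) y)"
        by (intro mult_mono power_mono) auto
      also have "\<dots> \<le> (A\<^sub>0\<^sup>2 + A\<^sub>\<beta>\<^sup>2) * (ennreal (q powr (2 * \<beta>)) * W (m - 2 * \<beta>) y)"
        by (intro mult_right_mono add_increasing2) auto
      finally show ?thesis by (simp add: mult_ac)
    qed
  qed
  have "(\<integral>\<^sup>+y. F y ^ 2 * W m y \<partial>lborel)
      \<le> (\<integral>\<^sup>+y. ennreal (q powr (2 * \<beta>)) * (A\<^sub>0\<^sup>2 + A\<^sub>\<beta>\<^sup>2) * W (m - 2 * \<beta>) y \<partial>lborel)"
    by (intro nn_integral_mono pointwise)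
  also have "\<dots> = ennreal (q powr (2 * \<beta>)) * (A\<^sub>0\<^sup>2 + A\<^sub>\<beta>\<^sup>2) * B"
    unfolding W_def B_def
    by (subst nn_integral_cmult) (simp_all add: nn_integral_weight_rescale[OF t])
  finally show ?thesis unfolding F_def W_def q_def .
qed

lemma good_cube_side_pos: "good_cube \<omega> r \<gamma> a l \<Longrightarrow> 0 < l"
  unfolding good_cube_def dyadic_grid_def by auto

lemma good_cube_sdist_frontier_gt:
  assumes "good_cube \<omega> r \<gamma> a l" and "(b, L) \<in> dyadic_grid \<omega>" and "2 ^ r * l \<le> L"
  shows "l powr \<gamma> * L powr (1 - \<gamma>) < sdist (cube a l) (frontier (cube b L))"
  using assms unfolding good_cube_def bad_cube_def by force

lemma separation_ratio_powr_le:
  fixes l t \<gamma> \<alpha> \<beta> :: real and k :: nat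
  assumes l: "0 < l" and t: "0 < t" "t < l" and k: "1 \<le> k" and \<beta>: "0 \<le> \<beta>"
    and \<beta>\<gamma>: "2 * \<beta> * (1 - \<gamma>) = \<alpha>"
  shows "(2 * t / (l powr \<gamma> * (2 ^ (k - 1) * l) powr (1 - \<gamma>))) powr (2 * \<beta>)
    \<le> 2 powr (2 * \<beta> + \<alpha>) * 2 powr (- \<alpha> * real k)"
proof -
  have "(2 ^ (k - 1) * l) powr (1 - \<gamma>) = 2 powr (real (k - 1) * (1 - \<gamma>)) * l powr (1 - \<gamma>)"
    using l by (simp add: powr_mult powr_realpow[symmetric] powr_powr)
  then have D: "l powr \<gamma> * (2 ^ (k - 1) * l) powr (1 - \<gamma>) = l * 2 powr (real (k - 1) * (1 - \<gamma>))"
    using l by (simp add: powr_add[symmetric] mult_ac)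
  have "2 * t / (l * 2 powr (real (k - 1) * (1 - \<gamma>))) \<le> 2 * l / (l * 2 powr (real (k - 1) * (1 - \<gamma>)))"
    using t l by (intro divide_right_mono) auto
  also have "\<dots> = 2 powr (1 - real (k - 1) * (1 - \<gamma>))"
    using l by (simp add: powr_diff)
  finally have "(2 * t / (l * 2 powr (real (k - 1) * (1 - \<gamma>)))) powr (2 * \<beta>)
      \<le> (2 powr (1 - real (k - 1) * (1 - \<gamma>))) powr (2 * \<beta>)"
    using t \<beta> by (intro powr_mono2) auto
  also have "\<dots> = 2 powr (2 * \<beta> + \<alpha> + (- \<alpha> * real k))"
  proof -
    obtain j where kj: "k = Suc j" using k by (cases k) auto
    have "(1 - real (k - 1) * (1 - \<gamma>)) * (2 * \<beta>) = 2 * \<beta> + \<alpha> + (- \<alpha> * real k)"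
      unfolding kj \<beta>\<gamma>[symmetric] by (simp add: algebra_simps)
    then show ?thesis by (simp add: powr_powr)
  qed
  also have "\<dots> = 2 powr (2 * \<beta> + \<alpha>) * 2 powr (- \<alpha> * real k)"
    by (rule powr_add)
  finally show ?thesis unfolding D .
qed

lemma nn_integral_square_kernel_weight_le_good_cube:
  fixes x a b :: "real^'n" and \<alpha> \<beta> \<gamma> m l t L :: real and r k :: nat
  assumes \<alpha>: "0 \<le> \<alpha>" and \<beta>: "0 \<le> \<beta>" and \<beta>\<gamma>: "2 * \<beta> * (1 - \<gamma>) = \<alpha>"
    and good: "good_cube \<omega> r \<gamma> a l" and k: "1 \<le> k" and x: "x \<in> cube a l"
    and t: "0 < t" "t < l" and bL: "(b, L) \<in> dyadic_grid \<omega>" and L: "L = 2 ^ (k - 1) * l"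
    and sub: "cube a l \<subseteq> cube b L"
  defines "A\<^sub>0 \<equiv> \<integral>\<^sup>+(u::real^'n). ennreal (1 / (1 + supn u) powr (real CARD('n) + \<alpha>)) \<partial>lborel"
    and "A\<^sub>\<beta> \<equiv> \<integral>\<^sup>+(u::real^'n). ennreal (1 / (1 + supn u) powr (real CARD('n) + (\<alpha> - \<beta>))) \<partial>lborel"
    and "B\<^sub>0 \<equiv> \<integral>\<^sup>+(u::real^'n). ennreal (1 / (1 + supn u) powr m) \<partial>lborel"
    and "B\<^sub>\<beta> \<equiv> \<integral>\<^sup>+(u::real^'n). ennreal (1 / (1 + supn u) powr (m - 2 * \<beta>)) \<partial>lborel"
  shows "(\<integral>\<^sup>+y. (\<integral>\<^sup>+z\<in>-cube b L. ennreal (t powr \<alpha> / (t + supn (x - y - z)) powr (real CARD('n) + \<alpha>)) \<partial>lborel) ^ 2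
           * ennreal ((t / (t + supn y)) powr m / t ^ CARD('n)) \<partial>lborel)
    \<le> (A\<^sub>0\<^sup>2 + A\<^sub>\<beta>\<^sup>2) * (B\<^sub>0 + B\<^sub>\<beta>) * ennreal (2 powr (2 * \<beta> + \<alpha> + \<alpha> * real r) * 2 powr (- \<alpha> * real k))"
    (is "?I \<le> ?A * ?B * ennreal ?c")
proof -
  have l: "0 < l" using good by (rule good_cube_side_pos)
  have c: "?c = 2 powr (2 * \<beta> + \<alpha> + \<alpha> * (real r - real k))"
    by (simp add: powr_add[symmetric] algebra_simps)
  show ?thesis
  proof (cases "k \<le> r")
    case True
    have "?I \<le> (\<integral>\<^sup>+(y::real^'n). A\<^sub>0\<^sup>2 * ennreal ((t / (t + supn y)) powr m / t ^ CARD('n)) \<partial>lborel)"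
      unfolding A\<^sub>0_def
      by (intro nn_integral_mono mult_right_mono power_mono nn_integral_kernel_on_le[OF t(1)]) auto
    also have "\<dots> = A\<^sub>0\<^sup>2 * B\<^sub>0"
      unfolding B\<^sub>0_def by (subst nn_integral_cmult) (simp_all add: nn_integral_weight_rescale[OF t(1)])
    also have "\<dots> \<le> ?A * ?B * ennreal 1"
      by (simp add: mult_mono add_increasing add_increasing2)
    also have "\<dots> \<le> ?A * ?B * ennreal ?c"
      unfolding c using True \<alpha> \<beta> by (intro mult_left_mono ennreal_leI ge_one_powr_ge_zero) auto
    finally show ?thesis .
  next
    case False
    define D where "D = l powr \<gamma> * L powr (1 - \<gamma>)"
    have D: "0 < D" unfolding D_def L using l by simp
    have "(2::real) ^ r \<le> 2 ^ (k - 1)" using False by (intro power_increasing) auto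
    then have "2 ^ r * l \<le> L" unfolding L using l by simp
    then have "D < sdist (cube a l) (frontier (cube b L))"
      unfolding D_def by (rule good_cube_sdist_frontier_gt[OF good bL])
    then have sep: "D < supn (x - z)" if "z \<notin> cube b L" for z
      using sdist_frontier_less_supn_diff[OF x _ that] sub x by blast
    have "?I \<le> ennreal ((2 * t / D) powr (2 * \<beta>)) * ?A * B\<^sub>\<beta>"
      unfolding A\<^sub>0_def A\<^sub>\<beta>_def B\<^sub>\<beta>_def
      by (rule nn_integral_square_kernel_weight_le_separated[OF t(1) D \<beta> sep])
    also have "\<dots> \<le> ennreal ?c * ?A * ?B"
    proof (intro mult_mono ennreal_leI)
      have "(2 * t / D) powr (2 * \<beta>) \<le> 2 powr (2 * \<beta> + \<alpha>) * 2 powr (- \<alpha> * real k)"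
        unfolding D_def L by (rule separation_ratio_powr_le[OF l t k \<beta> \<beta>\<gamma>])
      also have "\<dots> \<le> ?c"
        using \<alpha> by (intro mult_right_mono powr_mono) auto
      finally show "(2 * t / D) powr (2 * \<beta>) \<le> ?c" .
    qed (auto simp: add_increasing)
    finally show ?thesis by (simp add: mult_ac)
  qed
qed

lemma ennreal_finite_mult_square_le:
  assumes "M < \<infinity>"
  obtains C :: real where "0 < C" and "\<And>e. M * ennreal (e\<^sup>2) \<le> ennreal ((C * e)\<^sup>2)"
proof
  define C where "C = sqrt (enn2real M) + 1"
  show "0 < C" unfolding C_def by (simp add: add_nonneg_pos)
  fix e :: real
  have "enn2real M \<le> C\<^sup>2"
    unfolding C_def by (metis power_mono real_sqrt_pow2 enn2real_nonneg less_add_one less_imp_le real_sqrt_ge_zero)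
  then have "enn2real M * e\<^sup>2 \<le> (C * e)\<^sup>2"
    by (simp add: power_mult_distrib mult_right_mono)
  moreover have "M = ennreal (enn2real M)" using assms by simp
  ultimately show "M * ennreal (e\<^sup>2) \<le> ennreal ((C * e)\<^sup>2)"
    by (metis ennreal_leI ennreal_mult' enn2real_nonneg)
qed

lemma gain_exponent:
  fixes n \<alpha> lam :: real
  assumes n: "0 < n" and \<alpha>: "0 < \<alpha>" and \<alpha>lam: "\<alpha> \<le> n * (lam - 2) / 2"
  defines "\<beta> \<equiv> \<alpha> * (n + \<alpha>) / (2 * n + \<alpha>)"
  shows "0 < \<beta>" and "\<beta> < \<alpha>" and "2 * \<beta> * (1 - \<alpha> / (2 * (n + \<alpha>))) = \<alpha>"
    and "n < n * lam - 2 * \<beta>"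
proof -
  show "0 < \<beta>" unfolding \<beta>_def using n \<alpha> by simp
  show "\<beta> < \<alpha>" unfolding \<beta>_def using n \<alpha> by (simp add: field_simps)
  then show "n < n * lam - 2 * \<beta>" using \<alpha>lam n by (simp add: field_simps)
  have "1 - \<alpha> / (2 * (n + \<alpha>)) = (2 * n + \<alpha>) / (2 * (n + \<alpha>))"
    using n \<alpha> by (simp add: field_simps)
  then show "2 * \<beta> * (1 - \<alpha> / (2 * (n + \<alpha>))) = \<alpha>"
    unfolding \<beta>_def using n \<alpha> by simp (simp add: field_simps)
qed

theorem mainTheorem5:
  fixes \<alpha> lam1 :: real and r :: nat
  assumes "lam1 > 2" and "0 < \<alpha>"
    and "\<alpha> \<le> real CARD('n) * (lam1 - 2) / 2" and "r \<ge> 1"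
  shows "\<exists>C>0. \<forall>(\<omega>::int \<Rightarrow> real^'n) a l (k::nat) x\<^sub>1 t\<^sub>1 b L.
     valid_shift \<omega> \<and>
     good_cube \<omega> r (\<alpha> / (2 * (real CARD('n) + \<alpha>))) a l \<and> k \<ge> 1 \<and>
     x\<^sub>1 \<in> cube a l \<and> l / 2 < t\<^sub>1 \<and> t\<^sub>1 < l \<and>
     (b, L) \<in> dyadic_grid \<omega> \<and> L = 2 ^ (k - 1) * l \<and> cube a l \<subseteq> cube b L
     \<longrightarrow>
     (\<integral>\<^sup>+ y\<^sub>1.
        (\<integral>\<^sup>+ z\<^sub>1 \<in> - cube b L.
            ennreal (t\<^sub>1 powr \<alpha> / (t\<^sub>1 + supn (x\<^sub>1 - y\<^sub>1 - z\<^sub>1)) powr (real CARD('n) + \<alpha>)) \<partial>lborel) ^ 2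
        * ennreal ((t\<^sub>1 / (t\<^sub>1 + supn y\<^sub>1)) powr (real CARD('n) * lam1) / t\<^sub>1 ^ CARD('n)) \<partial>lborel)
     \<le> ennreal ((C * 2 powr (- \<alpha> * real k / 2)) ^ 2)"
proof -
  let ?n = "real CARD('n)"
  define \<beta> where "\<beta> = \<alpha> * (?n + \<alpha>) / (2 * ?n + \<alpha>)"
  have "0 < ?n" by simp
  note \<beta> = gain_exponent[of ?n \<alpha> lam1, folded \<beta>_def, OF this \<open>0 < \<alpha>\<close> assms(3)]
  define M where "M = ((\<integral>\<^sup>+(u::real^'n). ennreal (1 / (1 + supn u) powr (?n + \<alpha>)) \<partial>lborel)\<^sup>2
      + (\<integral>\<^sup>+(u::real^'n). ennreal (1 / (1 + supn u) powr (?n + (\<alpha> - \<beta>))) \<partial>lborel)\<^sup>2)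
    * ((\<integral>\<^sup>+(u::real^'n). ennreal (1 / (1 + supn u) powr (?n * lam1)) \<partial>lborel)
      + (\<integral>\<^sup>+(u::real^'n). ennreal (1 / (1 + supn u) powr (?n * lam1 - 2 * \<beta>)) \<partial>lborel))
    * ennreal (2 powr (2 * \<beta> + \<alpha> + \<alpha> * real r))"
  have "?n < ?n + \<alpha>" "?n < ?n + (\<alpha> - \<beta>)" "?n < ?n * lam1" "?n < ?n * lam1 - 2 * \<beta>"
    using \<beta>(1,2,4) \<open>0 < \<alpha>\<close> by linarith+
  note finite = this[THEN nn_integral_one_plus_supn_powr_finite]
  have "M < \<infinity>"
    unfolding M_def using finite
    by (simp add: ennreal_mult_less_top power_less_top_ennreal)
  then obtain C where "0 < C" and C: "\<And>e. M * ennreal (e\<^sup>2) \<le> ennreal ((C * e)\<^sup>2)"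
    using ennreal_finite_mult_square_le by blast
  show ?thesis
  proof (intro exI[of _ C] conjI allI impI \<open>0 < C\<close>, elim conjE)
    fix \<omega> :: "int \<Rightarrow> real^'n" and a b x\<^sub>1 :: "real^'n" and l t\<^sub>1 L :: real and k :: nat
    assume good: "good_cube \<omega> r (\<alpha> / (2 * (?n + \<alpha>))) a l" and cube_hyps: "1 \<le> k" "x\<^sub>1 \<in> cube a l"
      and t: "l / 2 < t\<^sub>1" "t\<^sub>1 < l"
      and grid_hyps: "(b, L) \<in> dyadic_grid \<omega>" "L = 2 ^ (k - 1) * l" "cube a l \<subseteq> cube b L"
    show "(\<integral>\<^sup>+ y\<^sub>1. (\<integral>\<^sup>+ z\<^sub>1 \<in> - cube b L. ennreal (t\<^sub>1 powr \<alpha> / (t\<^sub>1 + supn (x\<^sub>1 - y\<^sub>1 - z\<^sub>1)) powr (?n + \<alpha>)) \<partial>lborel) ^ 2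
        * ennreal ((t\<^sub>1 / (t\<^sub>1 + supn y\<^sub>1)) powr (?n * lam1) / t\<^sub>1 ^ CARD('n)) \<partial>lborel)
      \<le> ennreal ((C * 2 powr (- \<alpha> * real k / 2)) ^ 2)" (is "?I \<le> _")
    proof -
      have "0 < t\<^sub>1" using t good_cube_side_pos[OF good] by linarith
      have square: "(2 powr (- \<alpha> * real k / 2))\<^sup>2 = (2::real) powr (- \<alpha> * real k)"
        by (simp add: power2_eq_square powr_add[symmetric])
      from nn_integral_square_kernel_weight_le_good_cube[OF _ _ \<beta>(3) good cube_hyps \<open>0 < t\<^sub>1\<close> t(2) grid_hyps]
      have "?I \<le> M * ennreal ((2 powr (- \<alpha> * real k / 2))\<^sup>2)"
        using \<beta> \<open>0 < \<alpha>\<close> unfolding square M_def by (simp add: ennreal_mult mult.assoc)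
      also have "\<dots> \<le> ennreal ((C * 2 powr (- \<alpha> * real k / 2))\<^sup>2)"
        by (rule C)
      finally show ?thesis .
    qed
  qed
qed

end
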